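(* Let $L>0$, $\theta_1>0$, $\theta_2>0$, $0\le \epsilon<1$, $\omega\ge 0$, and let $c(t)=\theta_1(1+\epsilon\cos(\omega t))$. Fix a setpoint $x^*\in(0,L)$ and a constant $v_{\max}$ with $v(x^* )<v_{\max}<1$, where $v(x^* )=\frac{\theta_2x^*}{1+\theta_2x^*}$. Let $S(x^* )\in\mathbb{R}$ satisfy $S(x^* )\ge S_{\min}(x^* )$, where $$S_{\min}(x^* )=\frac{x^*}{\frac{1}{\theta_2x^*}+1}\max\left\{\frac{v_{\max}\left(1+\frac{1}{\theta_2x^*}\right)-1}{x^*};\ \frac{1}{L-x^*}\right\},$$ and let $a_{\rm l}(x^* )>0$ and $a_{\rm r}(x^* )>0$ be solutions of $$a_{\rm l}(x^* )(v_{\max}-v(x^* ))-S(x^* )\big(1-e^{-a_{\rm l}(x^* )x^*}\big)=0,\qquad a_{\rm r}(x^* )v(x^* )-S(x^* )\big(1-e^{-a_{\rm r}(x^* )(L-x^* )}\big)=0.$$ Consider the delay-free system $$\dot x(t)=c(t)\left[-\frac{\theta_2x(t)}{(1+\theta_2x(t))(1-U(t))}+\frac{U(t)}{1-U(t)}\right]$$ in closed loop with the feedback $U(t)=v(x(t),x^* )$ (defined in the context), with initial condition $x(0)=x_0\in[0,L)$. Then the closed-loop system is globally exponentially stable at $x=x^*$ on the physical domain: for every $x_0\in[0,L)$ the solution exists for all $t\ge0$, stays in $[0,L]$, and there exist constants $k,\lambda>0$ (independent of $x_0$) such that $|x(t)-x^*|\le k e^{-\lambda t}|x_0-x^*|$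 for all $t\ge 0$.
   Context: The feedback is the piecewise exponential ("Bang-Bang-like") law $v(x,x^* )=v_{\rm l}(x,x^* )$ for $x\le x^*$ and $v(x,x^* )=v_{\rm r}(x,x^* )$ for $x> x^*$, where $$v_{\rm l}(x,x^* )=v(x^* )+(v_{\max}-v(x^* ))\frac{1-e^{a_{\rm l}(x^* )(x-x^* )}}{1-e^{-a_{\rm l}(x^* )x^*}},\qquad v_{\rm r}(x,x^* )=v(x^* )-v(x^* )\frac{1-e^{-a_{\rm r}(x^* )(x-x^* )}}{1-e^{-a_{\rm r}(x^* )(L-x^* )}},$$ with $v(x^* )=\theta_2x^*/(1+\theta_2x^* )$. Here $x(t)$ is the length of the fully filled zone of a screw extruder, $U$ is the inlet filling ratio, $v_{\max}<1$ is the maximal inlet filling ratio. *)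

theory Defs
  imports "HOL-Analysis.Analysis"
begin

definition vset :: "real \<Rightarrow> real \<Rightarrow> real" where
  "vset \<theta>\<^sub>2 xs = \<theta>\<^sub>2 * xs / (1 + \<theta>\<^sub>2 * xs)"

definition v_l :: "real \<Rightarrow> real \<Rightarrow> real \<Rightarrow> real \<Rightarrow> real \<Rightarrow> real" where
  "v_l \<theta>\<^sub>2 vmax al xs x =
     vset \<theta>\<^sub>2 xs + (vmax - vset \<theta>\<^sub>2 xs) * (1 - exp (al * (x - xs))) / (1 - exp (- al * xs))"

definition v_r :: "real \<Rightarrow> real \<Rightarrow> real \<Rightarrow> real \<Rightarrow> real \<Rightarrow> real" where
  "v_r \<theta>\<^sub>2 L ar xs x =
     vset \<theta>\<^sub>2 xs - vset \<theta>\<^sub>2 xs * (1 - exp (- ar * (x - xs))) / (1 - exp (- ar * (L - xs)))"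

definition feedback :: "real \<Rightarrow> real \<Rightarrow> real \<Rightarrow> real \<Rightarrow> real \<Rightarrow> real \<Rightarrow> real \<Rightarrow> real" where
  "feedback \<theta>\<^sub>2 L vmax al ar xs x =
     (if x \<le> xs then v_l \<theta>\<^sub>2 vmax al xs x else v_r \<theta>\<^sub>2 L ar xs x)"

definition Smin :: "real \<Rightarrow> real \<Rightarrow> real \<Rightarrow> real \<Rightarrow> real" where
  "Smin \<theta>\<^sub>2 L vmax xs =
     xs / (1 / (\<theta>\<^sub>2 * xs) + 1) *
       max ((vmax * (1 + 1 / (\<theta>\<^sub>2 * xs)) - 1) / xs) (1 / (L - xs))"

definition coef :: "real \<Rightarrow> real \<Rightarrow> real \<Rightarrow> real \<Rightarrow> real" where
  "coef \<theta>\<^sub>1 \<epsilon> \<omega> t = \<theta>\<^sub>1 * (1 + \<epsilon> * cos (\<omega> * t))"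

definition plant :: "real \<Rightarrow> real \<Rightarrow> real \<Rightarrow> real \<Rightarrow> real \<Rightarrow> real \<Rightarrow> real \<Rightarrow> real" where
  "plant \<theta>\<^sub>1 \<theta>\<^sub>2 \<epsilon> \<omega> t x U =
     coef \<theta>\<^sub>1 \<epsilon> \<omega> t * (- (\<theta>\<^sub>2 * x) / ((1 + \<theta>\<^sub>2 * x) * (1 - U)) + U / (1 - U))"

definition closed_loop :: "real \<Rightarrow> real \<Rightarrow> real \<Rightarrow> real \<Rightarrow> real \<Rightarrow> real \<Rightarrow> real \<Rightarrow> real \<Rightarrow> real \<Rightarrow> real \<Rightarrow> real \<Rightarrow> real" where
  "closed_loop \<theta>\<^sub>1 \<theta>\<^sub>2 \<epsilon> \<omega> L vmax al ar xs t x =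
     plant \<theta>\<^sub>1 \<theta>\<^sub>2 \<epsilon> \<omega> t x (feedback \<theta>\<^sub>2 L vmax al ar xs x)"

definition is_solution :: "real \<Rightarrow> real \<Rightarrow> real \<Rightarrow> real \<Rightarrow> real \<Rightarrow> real \<Rightarrow> real \<Rightarrow> real \<Rightarrow> real \<Rightarrow> real \<Rightarrow> (real \<Rightarrow> real) \<Rightarrow> bool" where
  "is_solution \<theta>\<^sub>1 \<theta>\<^sub>2 \<epsilon> \<omega> L vmax al ar xs x0 x \<longleftrightarrow>
     x 0 = x0 \<and>
     (\<forall>t\<ge>0. (x has_real_derivative closed_loop \<theta>\<^sub>1 \<theta>\<^sub>2 \<epsilon> \<omega> L vmax al ar xs t (x t)) (at t within {0..}))"

end

theory Submission
  imports Defs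
begin

text \<open>
  The closed loop reads \<open>x' = c(t) G(x)\<close> with \<open>c(t) \<ge> \<theta>\<^sub>1 (1 - \<epsilon>) > 0\<close>. On \<open>[0, L]\<close>
  the feedback lies in \<open>[0, vmax]\<close>, deviates from \<open>v(xs)\<close> towards the side of \<open>xs - x\<close>, and
  by the defining equations of \<open>al\<close> and \<open>ar\<close> satisfies \<open>|v(x, xs) - v(xs)| \<le> S |x - xs|\<close>.
  Hence the drift obeys \<open>\<mu> (x - xs)\<^sup>2 \<le> (xs - x) G(x)\<close> and \<open>|G(x)| \<le> K |x - xs|\<close>.
  A solution is obtained by solving \<open>\<psi>' = G(\<psi>)\<close> by separation of variables (the linear
  bound on \<open>G\<close> makes the time needed to reach \<open>xs\<close> infinite, so \<open>\<psi>\<close> is global and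
  moves monotonically towards \<open>xs\<close>) and reparametrising time by a primitive of \<open>c\<close>.
  Every solution stays in \<open>[0, L]\<close> because \<open>G\<close> points inwards at both ends, and then
  \<open>(x - xs)\<^sup>2 exp (2 \<lambda> t)\<close> with \<open>\<lambda> = \<theta>\<^sub>1 (1 - \<epsilon>) \<mu>\<close> is nonincreasing.
\<close>

lemma integral_has_real_derivative_upper:
  fixes h :: "real \<Rightarrow> real"
  assumes cont: "continuous_on {c..<b} h" and y: "c < y" "y < b"
  shows "((\<lambda>y. integral {c..y} h) has_real_derivative h y) (at y)"
proof -
  have "continuous_on {c..(y + b) / 2} h"
    using cont by (rule continuous_on_subset) (use y in auto)
  then have "((\<lambda>y. integral {c..y} h) has_real_derivative h y) (at y within {c..(y + b) / 2})"
    by (rule integral_has_real_derivative) (use y in auto)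
  moreover have "at y within {c..(y + b) / 2} = at y"
    by (rule at_within_interior) (use y in auto)
  ultimately show ?thesis by simp
qed

lemma increasing_inverse_has_real_derivative:
  fixes \<Phi> \<phi> :: "real \<Rightarrow> real"
  assumes deriv: "\<And>y. y \<in> {a<..<b} \<Longrightarrow> (\<Phi> has_real_derivative \<phi> y) (at y)"
    and pos: "\<And>y. y \<in> {a<..<b} \<Longrightarrow> 0 < \<phi> y"
  obtains \<psi> where "\<And>y. y \<in> {a<..<b} \<Longrightarrow> \<psi> (\<Phi> y) = y"
    and "\<And>y. y \<in> {a<..<b} \<Longrightarrow> (\<psi> has_real_derivative inverse (\<phi> y)) (at (\<Phi> y))"
proof
  let ?I = "{a<..<b}" and ?\<psi> = "the_inv_into {a<..<b} \<Phi>"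
  have mono: "\<Phi> y < \<Phi> z" if "y \<in> ?I" "z \<in> ?I" "y < z" for y z
  proof (rule DERIV_pos_imp_increasing[OF \<open>y < z\<close>])
    fix w assume "y \<le> w" "w \<le> z"
    then have "w \<in> ?I" using that by auto
    then show "\<exists>d. (\<Phi> has_real_derivative d) (at w) \<and> 0 < d" using deriv pos by blast
  qed
  then have "inj_on \<Phi> ?I"
    by (metis linorder_inj_onI' order_less_imp_not_eq)
  then show inv: "?\<psi> (\<Phi> y) = y" if "y \<in> ?I" for y
    using that by (rule the_inv_into_f_f)
  fix y assume y: "y \<in> ?I"
  define d where "d = min (y - a) (b - y) / 2"
  have d: "0 < d" "d < y - a" "d < b - y" using y by (auto simp: d_def)
  have near: "z \<in> ?I" if "\<bar>z - y\<bar> \<le> d" for z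
    using that d by (auto simp: abs_le_iff)
  have cont: "isCont \<Phi> z" if "z \<in> ?I" for z using deriv[OF that] by (rule DERIV_isCont)
  show "(?\<psi> has_real_derivative inverse (\<phi> y)) (at (\<Phi> y))"
  proof (rule DERIV_inverse_function)
    show "(\<Phi> has_real_derivative \<phi> y) (at (?\<psi> (\<Phi> y)))" using deriv inv y by simp
    show "\<phi> y \<noteq> 0" using pos[OF y] by simp
    show "\<Phi> (y - d) < \<Phi> y" "\<Phi> y < \<Phi> (y + d)" using mono near d y by auto
    show "\<Phi> (?\<psi> s) = s" if s: "\<Phi> (y - d) < s" "s < \<Phi> (y + d)" for s
    proof -
      have "continuous_on {y - d..y + d} \<Phi>"
        using cont near by (intro continuous_at_imp_continuous_on) (auto simp: abs_le_iff)
      then obtain z where "y - d \<le> z" "z \<le> y + d" "\<Phi> z = s"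
        using IVT'[of \<Phi> "y - d" s "y + d"] s d by auto
      then show ?thesis using inv near[of z] by (auto simp: abs_le_iff)
    qed
    show "isCont ?\<psi> (\<Phi> y)"
      using isCont_inverse_function[OF d(1), where f = \<Phi> and g = ?\<psi>] cont inv near by blast
  qed
qed

lemma reciprocal_primitive_unbounded:
  fixes f :: "real \<Rightarrow> real"
  assumes cont: "continuous_on {..<e} f" and pos: "\<And>z. z < e \<Longrightarrow> 0 < f z"
    and lin: "\<And>z. z < e \<Longrightarrow> f z \<le> K * (e - z)" and p: "p < e"
  obtains \<Phi> where "\<And>y. y \<in> {p - 1<..<e} \<Longrightarrow> (\<Phi> has_real_derivative 1 / f y) (at y)"
    and "\<Phi> p = 0" and "{0..} \<subseteq> \<Phi> ` {p..<e}"
proof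
  have "0 < K * (e - p)" using pos[OF p] lin[OF p] by linarith
  then have K: "0 < K" using p by (simp add: zero_less_mult_iff)
  have "continuous_on {p - 1..<e} f" using cont by (rule continuous_on_subset) auto
  moreover have "f z \<noteq> 0" if "z < e" for z using pos[OF that] by simp
  ultimately have h_cont: "continuous_on {p - 1..<e} (\<lambda>z. 1 / f z)"
    by (intro continuous_intros) auto
  define \<Phi> where "\<Phi> y = integral {p - 1..y} (\<lambda>z. 1 / f z) - integral {p - 1..p} (\<lambda>z. 1 / f z)" for y
  show deriv: "(\<Phi> has_real_derivative 1 / f y) (at y)" if "y \<in> {p - 1<..<e}" for y
    using integral_has_real_derivative_upper[OF h_cont, of y] that
    unfolding \<Phi>_def[abs_def] by (auto intro!: derivative_eq_intros)
  have \<Phi>_cont: "continuous_on {p..y} \<Phi>" if "y < e" for y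
  proof (intro continuous_at_imp_continuous_on ballI)
    fix z assume "z \<in> {p..y}"
    then show "isCont \<Phi> z" using deriv[of z] that by (auto intro: DERIV_isCont)
  qed
  show \<Phi>_p: "\<Phi> p = 0" by (simp add: \<Phi>_def)
  have growth: "(ln (e - p) - ln (e - y)) / K \<le> \<Phi> y" if y: "p \<le> y" "y < e" for y
  proof -
    have "\<Phi> p + ln (e - p) / K \<le> \<Phi> y + ln (e - y) / K"
    proof (rule DERIV_nonneg_imp_increasing_open[OF \<open>p \<le> y\<close>])
      fix z assume z: "p < z" "z < y"
      have "1 / (K * (e - z)) \<le> 1 / f z"
        using lin[of z] pos[of z] z y by (intro divide_left_mono) auto
      then have "0 \<le> 1 / f z + (- 1 / (e - z)) / K" using K z y by (simp add: field_simps)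
      moreover have "((\<lambda>y. \<Phi> y + ln (e - y) / K) has_real_derivative
          1 / f z + (- 1 / (e - z)) / K) (at z)"
        using deriv[of z] z y p K by (auto intro!: derivative_eq_intros)
      ultimately show "\<exists>d. ((\<lambda>y. \<Phi> y + ln (e - y) / K) has_real_derivative d) (at z) \<and> 0 \<le> d"
        by blast
    qed (use \<Phi>_cont[OF \<open>y < e\<close>] y K in \<open>auto intro!: continuous_intros\<close>)
    then show ?thesis using K by (simp add: \<Phi>_p field_simps)
  qed
  show "{0..} \<subseteq> \<Phi> ` {p..<e}"
  proof
    fix s :: real assume "s \<in> {0..}"
    then have s: "0 \<le> s" by simp
    define y where "y = e - (e - p) * exp (- K * s)"
    have "(e - p) * exp (- K * s) \<le> e - p" using K s p by (intro mult_left_le) auto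
    moreover have "0 < (e - p) * exp (- K * s)" using p by simp
    ultimately have y: "p \<le> y" "y < e" unfolding y_def by linarith+
    have "ln (e - y) = ln (e - p) - K * s" using p by (simp add: y_def ln_mult)
    then have "s \<le> \<Phi> y" using growth[OF y] K by simp
    then obtain z where "p \<le> z" "z \<le> y" "\<Phi> z = s"
      using IVT'[of \<Phi> p s y] s y \<Phi>_cont[of y] by (auto simp: \<Phi>_p)
    then show "s \<in> \<Phi> ` {p..<e}" using y by force
  qed
qed

lemma autonomous_ode_rising_solution:
  fixes f :: "real \<Rightarrow> real"
  assumes "continuous_on {..<e} f" and pos: "\<And>z. z < e \<Longrightarrow> 0 < f z"
    and "\<And>z. z < e \<Longrightarrow> f z \<le> K * (e - z)" and p: "p < e"
  shows "\<exists>\<psi>. \<psi> 0 = p \<and> (\<forall>s\<ge>0. \<psi> s \<in> {p..<e} \<and> (\<psi> has_real_derivative f (\<psi> s)) (at s))"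
proof -
  obtain \<Phi> where deriv: "\<And>y. y \<in> {p - 1<..<e} \<Longrightarrow> (\<Phi> has_real_derivative 1 / f y) (at y)"
    and \<Phi>_p: "\<Phi> p = 0" and onto: "{0..} \<subseteq> \<Phi> ` {p..<e}"
    using reciprocal_primitive_unbounded[OF assms] by blast
  have "0 < 1 / f y" if "y \<in> {p - 1<..<e}" for y using pos that by simp
  then obtain \<psi> where inv: "\<And>y. y \<in> {p - 1<..<e} \<Longrightarrow> \<psi> (\<Phi> y) = y"
    and inv_deriv: "\<And>y. y \<in> {p - 1<..<e} \<Longrightarrow> (\<psi> has_real_derivative inverse (1 / f y)) (at (\<Phi> y))"
    using increasing_inverse_has_real_derivative[OF deriv] by blast
  show ?thesis
  proof (intro exI[of _ \<psi>] conjI allI impI)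
    show "\<psi> 0 = p" using inv[of p] p \<Phi>_p by simp
    fix s :: real assume "0 \<le> s"
    then obtain y where y: "y \<in> {p..<e}" "s = \<Phi> y" using onto by auto
    then have "y \<in> {p - 1<..<e}" by auto
    then have "\<psi> s = y" "(\<psi> has_real_derivative f y) (at s)"
      using inv inv_deriv y(2) by auto
    then show "\<psi> s \<in> {p..<e}" "(\<psi> has_real_derivative f (\<psi> s)) (at s)"
      using y(1) by auto
  qed
qed

lemma autonomous_ode_solution_toward_equilibrium:
  fixes g :: "real \<Rightarrow> real"
  assumes cont: "continuous_on UNIV g"
    and up: "\<And>z. z < e \<Longrightarrow> 0 < g z" and down: "\<And>z. e < z \<Longrightarrow> g z < 0"
    and lin: "\<And>z. \<bar>g z\<bar> \<le> K * \<bar>z - e\<bar>"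
  shows "\<exists>\<psi>. \<psi> 0 = p \<and> (\<forall>s\<ge>0. \<psi> s \<in> {min p e..max p e} \<and> (\<psi> has_real_derivative g (\<psi> s)) (at s))"
proof (cases p e rule: linorder_cases)
  case less
  have "g z \<le> K * (e - z)" if "z < e" for z using lin[of z] that by simp
  then obtain \<psi> where "\<psi> 0 = p" "\<forall>s\<ge>0. \<psi> s \<in> {p..<e} \<and> (\<psi> has_real_derivative g (\<psi> s)) (at s)"
    using autonomous_ode_rising_solution[of e g K p] continuous_on_subset[OF cont] up less by blast
  then show ?thesis using less by (intro exI[of _ \<psi>]) auto
next
  case equal
  have "g e = 0" using lin[of e] by simp
  then show ?thesis using equal by (intro exI[of _ "\<lambda>_. e"]) auto
next
  case greater
  have "continuous_on {..< - e} (\<lambda>w. g (- w))"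
    by (rule continuous_on_compose2[OF cont]) (auto intro: continuous_intros)
  then have "continuous_on {..< - e} (\<lambda>w. - g (- w))" by (rule continuous_on_minus)
  moreover have "- g (- w) \<le> K * (- e - w)" if "w < - e" for w
    using lin[of "- w"] that abs_ge_minus_self[of "g (- w)"] by (simp add: algebra_simps)
  ultimately obtain \<phi> where \<phi>: "\<phi> 0 = - p"
    "\<forall>s\<ge>0. \<phi> s \<in> {- p..< - e} \<and> (\<phi> has_real_derivative - g (- \<phi> s)) (at s)"
    using autonomous_ode_rising_solution[of "- e" "\<lambda>w. - g (- w)" K "- p"] down greater by force
  have "((\<lambda>s. - \<phi> s) has_real_derivative g (- \<phi> s)) (at s)" if "0 \<le> s" for s
    using DERIV_minus[of \<phi> "- g (- \<phi> s)" s] \<phi>(2) that by simp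
  then show ?thesis using \<phi> greater by (intro exI[of _ "\<lambda>s. - \<phi> s"]) auto
qed

lemma invariant_lower_barrier:
  fixes x D :: "real \<Rightarrow> real"
  assumes deriv: "\<And>t. 0 \<le> t \<Longrightarrow> (x has_real_derivative D t) (at t within {0..})"
    and start: "a \<le> x 0"
    and push: "\<And>t. 0 \<le> t \<Longrightarrow> x t = a \<Longrightarrow> 0 < D t"
    and t: "0 \<le> t"
  shows "a \<le> x t"
proof (rule ccontr)
  assume "\<not> a \<le> x t"
  then have xt: "x t < a" by simp
  have cont: "continuous_on {u..t} x" if "0 \<le> u" for u
    using that by (intro DERIV_continuous_on[of _ _ D] DERIV_subset[OF deriv]) auto
  define A where "A = {s \<in> {0..t}. a \<le> x s}"
  have "closed A"
    unfolding A_def using cont[of 0] by (intro continuous_on_closed_Collect_le) auto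
  moreover have "0 \<in> A" using start t by (simp add: A_def)
  moreover have bdd: "bdd_above A" by (auto simp: A_def bdd_above_def)
  ultimately have "Sup A \<in> A" by (intro closed_contains_Sup) auto
  define t0 where "t0 = Sup A"
  have t0: "0 \<le> t0" "t0 \<le> t" "a \<le> x t0" using \<open>Sup A \<in> A\<close> by (auto simp: A_def t0_def)
  have last: "s \<le> t0" if "s \<in> A" for s using cSup_upper[OF that bdd] by (simp add: t0_def)
  obtain s where s: "t0 \<le> s" "s \<le> t" "x s = a"
    using IVT2'[of x t a t0] xt t0 cont[of t0] by auto
  then have "s \<in> A" using t0 by (simp add: A_def)
  then have "x t0 = a" using last s by force
  then have "0 < D t0" using push t0 by simp
  then obtain d where d: "0 < d" "\<And>h. 0 < h \<Longrightarrow> t0 + h \<in> {0..} \<Longrightarrow> h < d \<Longrightarrow> x t0 < x (t0 + h)"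
    using has_real_derivative_pos_inc_right[OF deriv[OF t0(1)]] by blast
  have "t0 < t" using t0 xt \<open>x t0 = a\<close> by (cases "t0 = t") auto
  obtain m where "0 < m" "m \<le> d" "m \<le> t - t0"
    using d(1) \<open>t0 < t\<close> by (intro that[of "min d (t - t0)"]) auto
  then obtain h where h: "0 < h" "h < d" "t0 + h \<le> t"
    by (intro that[of "m / 2"]) linarith+
  then have "t0 + h \<in> A" using d(2)[of h] t0 \<open>x t0 = a\<close> by (simp add: A_def)
  then show False using last h by force
qed

lemma invariant_interval:
  fixes x D :: "real \<Rightarrow> real"
  assumes deriv: "\<And>t. 0 \<le> t \<Longrightarrow> (x has_real_derivative D t) (at t within {0..})"
    and start: "x 0 \<in> {a..b}"
    and up: "\<And>t. 0 \<le> t \<Longrightarrow> x t = a \<Longrightarrow> 0 < D t"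
    and down: "\<And>t. 0 \<le> t \<Longrightarrow> x t = b \<Longrightarrow> D t < 0"
    and t: "0 \<le> t"
  shows "x t \<in> {a..b}"
proof -
  have "a \<le> x t" using invariant_lower_barrier[OF deriv _ up t] start by simp
  moreover have "- b \<le> - x t"
  proof (rule invariant_lower_barrier[where x = "\<lambda>s. - x s" and D = "\<lambda>s. - D s"])
    show "((\<lambda>t. - x t) has_real_derivative - D s) (at s within {0..})" if "0 \<le> s" for s
      using deriv[OF that] by (rule DERIV_minus)
  qed (use start down t in auto)
  ultimately show ?thesis by simp
qed

lemma dissipative_exponential_decay:
  fixes x D :: "real \<Rightarrow> real"
  assumes deriv: "\<And>t. 0 \<le> t \<Longrightarrow> (x has_real_derivative D t) (at t within {0..})"
    and dissip: "\<And>t. 0 \<le> t \<Longrightarrow> (x t - c) * D t \<le> - r * (x t - c)\<^sup>2"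
    and t: "0 \<le> t"
  shows "\<bar>x t - c\<bar> \<le> exp (- r * t) * \<bar>x 0 - c\<bar>"
proof -
  define W where "W s = (x s - c)\<^sup>2 * exp (2 * r * s)" for s
  have "W t \<le> W 0"
  proof (rule DERIV_nonpos_imp_decreasing_open[OF t])
    fix s :: real assume s: "0 < s" "s < t"
    have "at s within {0..} = at s" by (rule at_within_interior) (use s in auto)
    then have "(x has_real_derivative D s) (at s)" using deriv[of s] s by simp
    then have "(W has_real_derivative 2 * exp (2 * r * s) * ((x s - c) * D s + r * (x s - c)\<^sup>2)) (at s)"
      unfolding W_def[abs_def] by (auto intro!: derivative_eq_intros simp: algebra_simps power2_eq_square)
    moreover have "2 * exp (2 * r * s) * ((x s - c) * D s + r * (x s - c)\<^sup>2) \<le> 0"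
      using dissip[of s] s by (intro mult_nonneg_nonpos) auto
    ultimately show "\<exists>y. (W has_real_derivative y) (at s) \<and> y \<le> 0" by blast
  next
    have "continuous_on {0..t} x" by (intro DERIV_continuous_on[of _ _ D] DERIV_subset[OF deriv]) auto
    then show "continuous_on {0..t} W" unfolding W_def[abs_def] by (intro continuous_intros)
  qed
  then have "(x t - c)\<^sup>2 \<le> (x 0 - c)\<^sup>2 * exp (- 2 * r * t)"
    by (simp add: W_def mult_exp_exp pos_le_divide_eq exp_minus field_simps)
  also have "\<dots> = (exp (- r * t) * \<bar>x 0 - c\<bar>)\<^sup>2"
    by (simp add: power_mult_distrib flip: exp_of_nat_mult)
  finally have "\<bar>x t - c\<bar>\<^sup>2 \<le> (exp (- r * t) * \<bar>x 0 - c\<bar>)\<^sup>2" by simp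
  then show ?thesis by (rule power2_le_imp_le) simp
qed

definition drift :: "real \<Rightarrow> real \<Rightarrow> real \<Rightarrow> real \<Rightarrow> real \<Rightarrow> real \<Rightarrow> real \<Rightarrow> real" where
  "drift \<theta>\<^sub>2 L vmax al ar xs x =
     - (\<theta>\<^sub>2 * x) / ((1 + \<theta>\<^sub>2 * x) * (1 - feedback \<theta>\<^sub>2 L vmax al ar xs x))
     + feedback \<theta>\<^sub>2 L vmax al ar xs x / (1 - feedback \<theta>\<^sub>2 L vmax al ar xs x)"

lemma closed_loop_eq_coef_drift:
  "closed_loop \<theta>\<^sub>1 \<theta>\<^sub>2 \<epsilon> \<omega> L vmax al ar xs t x = coef \<theta>\<^sub>1 \<epsilon> \<omega> t * drift \<theta>\<^sub>2 L vmax al ar xs x"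
  by (simp add: closed_loop_def plant_def drift_def)

lemma coef_lower_bound:
  assumes "0 \<le> \<theta>\<^sub>1" "0 \<le> \<epsilon>"
  shows "\<theta>\<^sub>1 * (1 - \<epsilon>) \<le> coef \<theta>\<^sub>1 \<epsilon> \<omega> t"
proof -
  have "- \<epsilon> \<le> \<epsilon> * cos (\<omega> * t)"
    using assms(2) mult_left_mono[OF cos_ge_minus_one, of \<epsilon>] by simp
  then show ?thesis unfolding coef_def using assms(1) by (intro mult_left_mono) auto
qed

lemma coef_primitive:
  obtains C where "C 0 = 0" "\<And>t. (C has_real_derivative coef \<theta>\<^sub>1 \<epsilon> \<omega> t) (at t)"
proof (cases "\<omega> = 0")
  case True
  show ?thesis
    by (rule that[of "\<lambda>t. \<theta>\<^sub>1 * (1 + \<epsilon>) * t"])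
      (auto simp: coef_def True intro!: derivative_eq_intros)
next
  case False
  show ?thesis
    by (rule that[of "\<lambda>t. \<theta>\<^sub>1 * (t + \<epsilon> * sin (\<omega> * t) / \<omega>)"])
      (use False in \<open>auto simp: coef_def algebra_simps intro!: derivative_eq_intros\<close>)
qed

lemma exp_profile_bounds:
  fixes a c d D S :: real
  assumes a: "0 < a" and c: "0 \<le> c" and d: "0 \<le> d" "d \<le> D" "0 < D"
    and eq: "a * c = S * (1 - exp (- a * D))"
  shows "0 \<le> c * (1 - exp (- a * d)) / (1 - exp (- a * D))"
    and "c * (1 - exp (- a * d)) / (1 - exp (- a * D)) \<le> c"
    and "c * (1 - exp (- a * d)) / (1 - exp (- a * D)) \<le> S * d"
proof -
  have den: "0 < 1 - exp (- a * D)" using a d by simp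
  have num: "0 \<le> 1 - exp (- a * d)" "1 - exp (- a * d) \<le> 1 - exp (- a * D)"
    using a d by (auto simp: mult_left_mono)
  show "0 \<le> c * (1 - exp (- a * d)) / (1 - exp (- a * D))" using c num den by simp
  show "c * (1 - exp (- a * d)) / (1 - exp (- a * D)) \<le> c"
    using c num den by (simp add: divide_le_eq mult_left_le mult_left_mono)
  have "c * (1 - exp (- a * d)) \<le> c * (a * d)"
    using c exp_ge_add_one_self[of "- a * d"] by (intro mult_left_mono) auto
  also have "\<dots> = d * (a * c)" by (simp add: ac_simps)
  also have "\<dots> = S * d * (1 - exp (- a * D))" by (simp add: eq ac_simps)
  finally show "c * (1 - exp (- a * d)) / (1 - exp (- a * D)) \<le> S * d"
    using den by (simp add: divide_le_eq)
qed

locale extruder_loop =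
  fixes L \<theta>\<^sub>2 xs vmax S al ar :: real
  assumes theta2_pos: "0 < \<theta>\<^sub>2" and xs: "0 < xs" "xs < L"
    and vmax: "vset \<theta>\<^sub>2 xs < vmax" "vmax < 1"
    and al: "0 < al" and ar: "0 < ar"
    and al_eq: "al * (vmax - vset \<theta>\<^sub>2 xs) = S * (1 - exp (- al * xs))"
    and ar_eq: "ar * vset \<theta>\<^sub>2 xs = S * (1 - exp (- ar * (L - xs)))"
begin

abbreviation "vs \<equiv> vset \<theta>\<^sub>2 xs"
abbreviation "U \<equiv> feedback \<theta>\<^sub>2 L vmax al ar xs"
abbreviation "G \<equiv> drift \<theta>\<^sub>2 L vmax al ar xs"

lemma setpoint_input_bounds: "0 < vs" "vs < 1"
  using theta2_pos xs by (auto simp: vset_def divide_less_eq add_pos_pos)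

lemma S_pos: "0 < S"
proof -
  have "0 < al * (vmax - vs)" using al vmax by simp
  then have "0 < S * (1 - exp (- al * xs))" using al_eq by simp
  then show ?thesis using mult_pos_pos[OF al xs(1)] by (simp add: zero_less_mult_iff)
qed

lemma feedback_right: "xs \<le> x \<Longrightarrow> U x = v_r \<theta>\<^sub>2 L ar xs x"
  by (cases "x = xs") (auto simp: feedback_def v_l_def v_r_def)

lemma feedback_bounds:
  assumes x: "0 \<le> x" "x \<le> L"
  shows "0 \<le> U x" "U x \<le> vmax" "0 \<le> (U x - vs) * (xs - x)" "\<bar>U x - vs\<bar> \<le> S * \<bar>x - xs\<bar>"
proof -
  have "0 \<le> U x \<and> U x \<le> vmax \<and> 0 \<le> (U x - vs) * (xs - x) \<and> \<bar>U x - vs\<bar> \<le> S * \<bar>x - xs\<bar>"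
  proof (cases "x \<le> xs")
    case True
    define r where "r = (vmax - vs) * (1 - exp (- al * (xs - x))) / (1 - exp (- al * xs))"
    have "U x = vs + r" using True by (simp add: feedback_def v_l_def r_def algebra_simps)
    moreover have "0 \<le> r" "r \<le> vmax - vs" "r \<le> S * (xs - x)"
      unfolding r_def using exp_profile_bounds[of al "vmax - vs" "xs - x" xs S] al vmax True x xs al_eq
      by auto
    ultimately show ?thesis using True setpoint_input_bounds by auto
  next
    case False
    define r where "r = vs * (1 - exp (- ar * (x - xs))) / (1 - exp (- ar * (L - xs)))"
    have "U x = vs - r" using False by (simp add: feedback_right v_r_def r_def)
    moreover have "0 \<le> r" "r \<le> vs" "r \<le> S * (x - xs)"
      unfolding r_def using exp_profile_bounds[of ar vs "x - xs" "L - xs" S] ar False x xs ar_eq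
        setpoint_input_bounds by auto
    ultimately show ?thesis using False vmax by (auto simp: mult_nonneg_nonpos)
  qed
  then show "0 \<le> U x" "U x \<le> vmax" "0 \<le> (U x - vs) * (xs - x)" "\<bar>U x - vs\<bar> \<le> S * \<bar>x - xs\<bar>"
    by auto
qed

lemma feedback_continuous: "continuous_on {0..L} U"
proof -
  have "1 - exp (- al * xs) \<noteq> 0" "1 - exp (- ar * (L - xs)) \<noteq> 0" using al ar xs by auto
  then have "continuous_on {0..xs} (v_l \<theta>\<^sub>2 vmax al xs)" "continuous_on {xs..L} (v_r \<theta>\<^sub>2 L ar xs)"
    unfolding v_l_def[abs_def] v_r_def[abs_def] by (auto intro!: continuous_intros)
  moreover have "U x = v_l \<theta>\<^sub>2 vmax al xs x" if "x \<in> {0..xs}" for x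
    using that by (simp add: feedback_def)
  moreover have "U x = v_r \<theta>\<^sub>2 L ar xs x" if "x \<in> {xs..L}" for x
    using that by (simp add: feedback_right)
  ultimately have "continuous_on ({0..xs} \<union> {xs..L}) U"
    by (intro continuous_on_closed_Un) (auto intro: continuous_on_eq)
  then show ?thesis using xs by (simp add: ivl_disj_un_two_touch)
qed

definition restoring_rate :: real where
  "restoring_rate = \<theta>\<^sub>2 / (1 + \<theta>\<^sub>2 * L)\<^sup>2"

definition drift_bound :: real where
  "drift_bound = (S + \<theta>\<^sub>2) / (1 - vmax)"

lemma restoring_rate_pos: "0 < restoring_rate"
proof -
  have "0 < 1 + \<theta>\<^sub>2 * L" using theta2_pos xs by (simp add: add_pos_pos)
  then show ?thesis using theta2_pos by (simp add: restoring_rate_def)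
qed

lemma drift_bound_pos: "0 < drift_bound"
  using S_pos theta2_pos vmax by (simp add: drift_bound_def)

lemma drift_eq: "G x = (U x - vset \<theta>\<^sub>2 x) / (1 - U x)"
  unfolding drift_def vset_def by (simp add: diff_divide_distrib flip: divide_divide_eq_left)

lemma setpoint_gap_bounds:
  assumes x: "0 \<le> x" "x \<le> L"
  shows "restoring_rate * (x - xs)\<^sup>2 \<le> (xs - x) * (vs - vset \<theta>\<^sub>2 x)"
    and "\<bar>vs - vset \<theta>\<^sub>2 x\<bar> \<le> \<theta>\<^sub>2 * \<bar>x - xs\<bar>"
proof -
  define P where "P = (1 + \<theta>\<^sub>2 * xs) * (1 + \<theta>\<^sub>2 * x)"
  have pos: "1 \<le> 1 + \<theta>\<^sub>2 * xs" "1 \<le> 1 + \<theta>\<^sub>2 * x" using theta2_pos xs x by auto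
  have "1 * 1 \<le> P" unfolding P_def using pos by (intro mult_mono) auto
  moreover have "P \<le> (1 + \<theta>\<^sub>2 * L) * (1 + \<theta>\<^sub>2 * L)"
    unfolding P_def using pos theta2_pos xs x by (intro mult_mono) auto
  ultimately have P: "1 \<le> P" "P \<le> (1 + \<theta>\<^sub>2 * L)\<^sup>2" by (simp_all add: power2_eq_square)
  have gap: "vs - vset \<theta>\<^sub>2 x = \<theta>\<^sub>2 * (xs - x) / P"
    using pos by (simp add: vset_def P_def field_simps)
  have "restoring_rate * (x - xs)\<^sup>2 = \<theta>\<^sub>2 * (xs - x)\<^sup>2 / (1 + \<theta>\<^sub>2 * L)\<^sup>2"
    by (simp add: restoring_rate_def power2_commute)
  also have "\<dots> \<le> \<theta>\<^sub>2 * (xs - x)\<^sup>2 / P"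
    using P theta2_pos by (intro divide_left_mono mult_pos_pos) auto
  also have "\<dots> = (xs - x) * (vs - vset \<theta>\<^sub>2 x)" by (simp add: gap power2_eq_square)
  finally show "restoring_rate * (x - xs)\<^sup>2 \<le> (xs - x) * (vs - vset \<theta>\<^sub>2 x)" .
  have "\<bar>vs - vset \<theta>\<^sub>2 x\<bar> = \<theta>\<^sub>2 * \<bar>x - xs\<bar> / P"
    using P theta2_pos by (simp add: gap abs_divide abs_mult abs_minus_commute)
  also have "\<dots> \<le> \<theta>\<^sub>2 * \<bar>x - xs\<bar> / 1"
    using P theta2_pos by (intro divide_left_mono) auto
  finally show "\<bar>vs - vset \<theta>\<^sub>2 x\<bar> \<le> \<theta>\<^sub>2 * \<bar>x - xs\<bar>" by simp
qed

lemma drift_bounds: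
  assumes x: "0 \<le> x" "x \<le> L"
  shows "restoring_rate * (x - xs)\<^sup>2 \<le> (xs - x) * G x" and "\<bar>G x\<bar> \<le> drift_bound * \<bar>x - xs\<bar>"
proof -
  define u where "u = U x"
  define w where "w = vset \<theta>\<^sub>2 x"
  have u: "0 \<le> u" "u \<le> vmax" "0 \<le> (u - vs) * (xs - x)" "\<bar>u - vs\<bar> \<le> S * \<bar>x - xs\<bar>"
    using feedback_bounds[OF x] by (simp_all add: u_def)
  have u1: "0 < 1 - u" using u vmax by simp
  have G: "G x = (u - w) / (1 - u)" by (simp add: drift_eq u_def w_def)
  have low: "restoring_rate * (x - xs)\<^sup>2 \<le> (xs - x) * (u - w)"
    using setpoint_gap_bounds(1)[OF x] u(3) by (simp add: w_def algebra_simps)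
  moreover have "0 \<le> restoring_rate * (x - xs)\<^sup>2" using restoring_rate_pos by simp
  ultimately have "0 \<le> (xs - x) * (u - w)" by linarith
  then have "(xs - x) * (u - w) \<le> (xs - x) * (u - w) / (1 - u)"
    using u(1) u1 by (simp add: le_divide_eq mult_left_le)
  with low show "restoring_rate * (x - xs)\<^sup>2 \<le> (xs - x) * G x" by (simp add: G)
  have "\<bar>u - w\<bar> \<le> (S + \<theta>\<^sub>2) * \<bar>x - xs\<bar>"
    using u(4) setpoint_gap_bounds(2)[OF x] abs_triangle_ineq[of "u - vs" "vs - w"]
    by (simp add: w_def algebra_simps)
  then have "\<bar>u - w\<bar> / (1 - u) \<le> (S + \<theta>\<^sub>2) * \<bar>x - xs\<bar> / (1 - vmax)"
    using u u1 vmax by (intro frac_le) auto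
  then show "\<bar>G x\<bar> \<le> drift_bound * \<bar>x - xs\<bar>"
    using u1 by (simp add: G drift_bound_def abs_divide)
qed

lemma drift_pos: "0 \<le> x \<Longrightarrow> x < xs \<Longrightarrow> 0 < G x"
  using drift_bounds(1)[of x] restoring_rate_pos xs
  by (smt (verit) mult_pos_pos zero_less_power2 zero_less_mult_iff)

lemma drift_neg: "xs < x \<Longrightarrow> x \<le> L \<Longrightarrow> G x < 0"
  using drift_bounds(1)[of x] restoring_rate_pos xs
  by (smt (verit) mult_pos_pos zero_less_power2 zero_less_mult_iff)

lemma drift_continuous: "continuous_on {0..L} G"
proof -
  have "U x \<noteq> 1" "1 + \<theta>\<^sub>2 * x \<noteq> 0" if "x \<in> {0..L}" for x
    using that feedback_bounds(2)[of x] vmax theta2_pos by (auto simp: add_nonneg_eq_0_iff)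
  with feedback_continuous show ?thesis
    unfolding drift_def by (intro continuous_intros) auto
qed

lemma drift_solution:
  assumes p: "0 \<le> p" "p \<le> L"
  shows "\<exists>\<psi>. \<psi> 0 = p \<and> (\<forall>s\<ge>0. \<psi> s \<in> {0..L} \<and> (\<psi> has_real_derivative G (\<psi> s)) (at s))"
proof -
  define clamp where "clamp z = max 0 (min L z)" for z :: real
  have clamp: "clamp z \<in> {0..L}" "\<bar>clamp z - xs\<bar> \<le> \<bar>z - xs\<bar>" for z
    using xs by (auto simp: clamp_def)
  have "continuous_on UNIV (\<lambda>z. G (clamp z))"
    by (rule continuous_on_compose2[OF drift_continuous]) (use clamp in \<open>auto simp: clamp_def intro!: continuous_intros\<close>)
  moreover have "0 < G (clamp z)" if "z < xs" for z
    using that clamp(1)[of z] xs by (intro drift_pos) (auto simp: clamp_def)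
  moreover have "G (clamp z) < 0" if "xs < z" for z
    using that clamp(1)[of z] xs by (intro drift_neg) (auto simp: clamp_def)
  moreover have "\<bar>G (clamp z)\<bar> \<le> drift_bound * \<bar>z - xs\<bar>" for z
    using drift_bounds(2)[of "clamp z"] clamp[of z] drift_bound_pos
    by (smt (verit) atLeastAtMost_iff mult_left_mono)
  ultimately obtain \<psi> where \<psi>: "\<psi> 0 = p"
    "\<forall>s\<ge>0. \<psi> s \<in> {min p xs..max p xs} \<and> (\<psi> has_real_derivative G (clamp (\<psi> s))) (at s)"
    using autonomous_ode_solution_toward_equilibrium[of "\<lambda>z. G (clamp z)" xs drift_bound p] by blast
  have range: "{min p xs..max p xs} \<subseteq> {0..L}" using p xs by auto
  show ?thesis
  proof (intro exI[of _ \<psi>] conjI allI impI)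
    fix s :: real assume "0 \<le> s"
    then have "\<psi> s \<in> {0..L}" using \<psi>(2) range by blast
    moreover from this have "clamp (\<psi> s) = \<psi> s" by (simp add: clamp_def)
    ultimately show "\<psi> s \<in> {0..L}" "(\<psi> has_real_derivative G (\<psi> s)) (at s)"
      using \<psi>(2) \<open>0 \<le> s\<close> by auto
  qed (rule \<psi>(1))
qed

lemma solution_has_derivative:
  "is_solution \<theta>\<^sub>1 \<theta>\<^sub>2 \<epsilon> \<omega> L vmax al ar xs x0 x \<Longrightarrow> 0 \<le> t \<Longrightarrow>
    (x has_real_derivative coef \<theta>\<^sub>1 \<epsilon> \<omega> t * G (x t)) (at t within {0..})"
  by (simp add: is_solution_def closed_loop_eq_coef_drift)

lemma closed_loop_solution_exists:
  assumes "0 \<le> \<theta>\<^sub>1" "0 \<le> \<epsilon>" "\<epsilon> \<le> 1" and x0: "0 \<le> x0" "x0 \<le> L"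
  shows "\<exists>x. is_solution \<theta>\<^sub>1 \<theta>\<^sub>2 \<epsilon> \<omega> L vmax al ar xs x0 x"
proof -
  obtain \<psi> where \<psi>: "\<psi> 0 = x0" "\<forall>s\<ge>0. \<psi> s \<in> {0..L} \<and> (\<psi> has_real_derivative G (\<psi> s)) (at s)"
    using drift_solution[OF x0] by blast
  obtain C where C: "C 0 = 0" "\<And>t. (C has_real_derivative coef \<theta>\<^sub>1 \<epsilon> \<omega> t) (at t)"
    using coef_primitive[of \<theta>\<^sub>1 \<epsilon> \<omega>] by blast
  have C_nonneg: "0 \<le> C t" if "0 \<le> t" for t
  proof -
    have "0 \<le> coef \<theta>\<^sub>1 \<epsilon> \<omega> s" for s
      using coef_lower_bound[of \<theta>\<^sub>1 \<epsilon> \<omega> s] assms by (smt (verit) mult_nonneg_nonneg)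
    then have "C 0 \<le> C t" using DERIV_nonneg_imp_nondecreasing[OF that] C(2) by blast
    with C(1) show ?thesis by simp
  qed
  have "((\<lambda>t. \<psi> (C t)) has_real_derivative closed_loop \<theta>\<^sub>1 \<theta>\<^sub>2 \<epsilon> \<omega> L vmax al ar xs t (\<psi> (C t)))
      (at t within {0..})" if "0 \<le> t" for t
  proof -
    have "((\<lambda>t. \<psi> (C t)) has_real_derivative G (\<psi> (C t)) * coef \<theta>\<^sub>1 \<epsilon> \<omega> t) (at t)"
      using DERIV_chain2[OF _ C(2)] \<psi>(2) C_nonneg[OF that] by blast
    then show ?thesis
      by (simp add: closed_loop_eq_coef_drift mult.commute has_field_derivative_at_within)
  qed
  then show ?thesis
    unfolding is_solution_def using \<psi>(1) C(1) by (intro exI[of _ "\<lambda>t. \<psi> (C t)"]) auto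
qed

lemma solution_in_domain:
  assumes "0 < \<theta>\<^sub>1" "0 \<le> \<epsilon>" "\<epsilon> < 1" and sol: "is_solution \<theta>\<^sub>1 \<theta>\<^sub>2 \<epsilon> \<omega> L vmax al ar xs x0 x"
    and "x0 \<in> {0..L}" "0 \<le> t"
  shows "x t \<in> {0..L}"
proof (rule invariant_interval[OF solution_has_derivative[OF sol]])
  have coef: "0 < coef \<theta>\<^sub>1 \<epsilon> \<omega> s" for s
    using coef_lower_bound[of \<theta>\<^sub>1 \<epsilon> \<omega> s] assms by (smt (verit) mult_pos_pos)
  show "x 0 \<in> {0..L}" using sol assms by (simp add: is_solution_def)
  show "0 < coef \<theta>\<^sub>1 \<epsilon> \<omega> s * G (x s)" if "0 \<le> s" "x s = 0" for s
    using coef drift_pos[of 0] xs that by simp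
  show "coef \<theta>\<^sub>1 \<epsilon> \<omega> s * G (x s) < 0" if "0 \<le> s" "x s = L" for s
    using coef drift_neg[of L] xs that by (simp add: mult_pos_neg)
qed (use \<open>0 \<le> t\<close> in auto)

lemma solution_decays:
  assumes "0 < \<theta>\<^sub>1" "0 \<le> \<epsilon>" "\<epsilon> < 1" and sol: "is_solution \<theta>\<^sub>1 \<theta>\<^sub>2 \<epsilon> \<omega> L vmax al ar xs x0 x"
    and "x0 \<in> {0..L}" "0 \<le> t"
  shows "\<bar>x t - xs\<bar> \<le> exp (- (\<theta>\<^sub>1 * (1 - \<epsilon>) * restoring_rate) * t) * \<bar>x0 - xs\<bar>"
proof -
  have "(x s - xs) * (coef \<theta>\<^sub>1 \<epsilon> \<omega> s * G (x s))
      \<le> - (\<theta>\<^sub>1 * (1 - \<epsilon>) * restoring_rate) * (x s - xs)\<^sup>2" if "0 \<le> s" for s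
  proof -
    have "x s \<in> {0..L}" using solution_in_domain[OF assms(1-3) sol] assms that by blast
    then have dissip: "(x s - xs) * G (x s) \<le> - (restoring_rate * (x s - xs)\<^sup>2)"
      using drift_bounds(1)[of "x s"] by (simp add: algebra_simps)
    moreover have "0 \<le> restoring_rate * (x s - xs)\<^sup>2" using restoring_rate_pos by simp
    ultimately have "coef \<theta>\<^sub>1 \<epsilon> \<omega> s * ((x s - xs) * G (x s)) \<le> \<theta>\<^sub>1 * (1 - \<epsilon>) * ((x s - xs) * G (x s))"
      using coef_lower_bound[of \<theta>\<^sub>1 \<epsilon> \<omega> s] assms by (intro mult_right_mono_neg) auto
    also have "\<dots> \<le> \<theta>\<^sub>1 * (1 - \<epsilon>) * (- (restoring_rate * (x s - xs)\<^sup>2))"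
      using dissip assms by (intro mult_left_mono) auto
    finally show ?thesis by (simp add: ac_simps)
  qed
  then have "\<bar>x t - xs\<bar> \<le> exp (- (\<theta>\<^sub>1 * (1 - \<epsilon>) * restoring_rate) * t) * \<bar>x 0 - xs\<bar>"
    using dissipative_exponential_decay[OF solution_has_derivative[OF sol]] assms by blast
  then show ?thesis using sol by (simp add: is_solution_def)
qed

end

theorem theorem1:
  fixes L \<theta>\<^sub>1 \<theta>\<^sub>2 \<epsilon> \<omega> xs vmax S al ar :: real
  assumes "L > 0" and "\<theta>\<^sub>1 > 0" and "\<theta>\<^sub>2 > 0" and "0 \<le> \<epsilon>" and "\<epsilon> < 1" and "\<omega> \<ge> 0"
    and "0 < xs" and "xs < L"
    and "vset \<theta>\<^sub>2 xs < vmax" and "vmax < 1"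
    and "S \<ge> Smin \<theta>\<^sub>2 L vmax xs"
    and "al > 0" and "ar > 0"
    and "al * (vmax - vset \<theta>\<^sub>2 xs) - S * (1 - exp (- al * xs)) = 0"
    and "ar * vset \<theta>\<^sub>2 xs - S * (1 - exp (- ar * (L - xs))) = 0"
  shows "\<exists>k>0. \<exists>lam>0. \<forall>x0\<in>{0..<L}.
           (\<exists>x. is_solution \<theta>\<^sub>1 \<theta>\<^sub>2 \<epsilon> \<omega> L vmax al ar xs x0 x) \<and>
           (\<forall>x. is_solution \<theta>\<^sub>1 \<theta>\<^sub>2 \<epsilon> \<omega> L vmax al ar xs x0 x \<longrightarrow>
              (\<forall>t\<ge>0. x t \<in> {0..L} \<and> \<bar>x t - xs\<bar> \<le> k * exp (- lam * t) * \<bar>x0 - xs\<bar>))"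
proof -
  interpret extruder_loop L \<theta>\<^sub>2 xs vmax S al ar
    by unfold_locales (use assms in auto)
  define rate where "rate = \<theta>\<^sub>1 * (1 - \<epsilon>) * restoring_rate"
  have "0 < rate" using assms restoring_rate_pos by (simp add: rate_def)
  moreover have "(\<exists>x. is_solution \<theta>\<^sub>1 \<theta>\<^sub>2 \<epsilon> \<omega> L vmax al ar xs x0 x) \<and>
      (\<forall>x. is_solution \<theta>\<^sub>1 \<theta>\<^sub>2 \<epsilon> \<omega> L vmax al ar xs x0 x \<longrightarrow>
        (\<forall>t\<ge>0. x t \<in> {0..L} \<and> \<bar>x t - xs\<bar> \<le> 1 * exp (- rate * t) * \<bar>x0 - xs\<bar>))"
    if "x0 \<in> {0..<L}" for x0
    using that assms closed_loop_solution_exists solution_in_domain solution_decays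
    by (auto simp: rate_def)
  ultimately show ?thesis using zero_less_one by blast
qed

end
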